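(* Let $\mathsf N>1$, $p\in(2,6)$, $\theta\in(\vartheta(p,3),1)$ and $\beta=1-\frac{p-2}{2p\theta}$. Then the equation $\theta(6-p)\big(x^\beta-\mathsf N\big)x-\big(2p\theta-3(p-2)\big)\Big(\theta\big(x^\beta-\mathsf N\big)+(1-\theta)(x-1)\mathsf N\Big)=0$ has a unique root in the interval $(\mathsf N^{1/\beta},\infty)$.
   Context: $\vartheta(p,3)=\frac{3(p-2)}{2p}$. *)

theory Defs
  imports Complex_Main
begin

definition vartheta :: "real \<Rightarrow> real \<Rightarrow> real" where
  "vartheta p d = d * (p - 2) / (2 * p)"

end

theory Submission
  imports Defs "HOL-Analysis.Analysis" "HOL-Real_Asymp.Real_Asymp"
begin

text \<open>Multiplying out, the left-hand side is
  \<open>a x\<^sup>\<beta>\<^sup>+\<^sup>1 - b x\<^sup>\<beta> + m x + k\<close> with \<open>a = \<theta>(6 - p) > 0\<close>, \<open>b = \<theta>(2p\<theta> - 3(p - 2)) > 0\<close>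
  and \<open>0 < \<beta> < 1\<close>: a convex function on \<open>(0, \<infinity>)\<close> that tends to \<open>\<infinity>\<close>.
  At \<open>N\<^bsup>1/\<beta>\<^esup>\<close> it is negative, so it has a root to the right by the intermediate value
  theorem, and by convexity it cannot vanish twice to the right of a point where it is negative.\<close>

lemma powr_concave:
  assumes "0 \<le> p" "p \<le> 1"
  shows "concave_on {0<..} (\<lambda>x::real. x powr p)"
proof (rule f''_le0_imp_concave)
  fix x :: real
  assume "x \<in> {0<..}"
  then show "((\<lambda>x. x powr p) has_real_derivative p * x powr (p - 1)) (at x)"
    and "((\<lambda>x. p * x powr (p - 1)) has_real_derivative p * ((p - 1) * x powr (p - 2))) (at x)"
    by (auto intro!: derivative_eq_intros simp: algebra_simps)
  show "p * ((p - 1) * x powr (p - 2)) \<le> 0"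
    using assms by (intro mult_nonneg_nonpos mult_nonpos_nonneg) auto
qed simp

lemma convex_on_powr_affine:
  fixes a b \<beta> m k :: real
  assumes "0 \<le> a" "0 \<le> b" "0 \<le> \<beta>" "\<beta> \<le> 1"
  shows "convex_on {0<..} (\<lambda>x. a * x powr (\<beta> + 1) - b * x powr \<beta> + m * x + k)"
proof -
  have convex: "convex_on {0<..} (\<lambda>x. a * x powr (\<beta> + 1))"
    using convex_on_cmul[OF assms(1) powr_convex[of "\<beta> + 1"]] assms(3) by simp
  have concave: "concave_on {0<..} (\<lambda>x. b * x powr \<beta>)"
    using concave_on_cmul[OF assms(2) powr_concave[OF assms(3,4)]] .
  have affine: "convex_on {0<..} (\<lambda>x. m * x + k)"
    by (rule convex_on_linorderI) (simp_all add: algebra_simps)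
  show ?thesis
    using convex_on_add[OF convex_on_diff[OF convex concave] affine] by (simp add: add.assoc)
qed

lemma convex_on_neg_between:
  fixes f :: "real \<Rightarrow> real"
  assumes "convex_on S f" "a \<in> S" "z \<in> S" "a < y" "y < z" "f a < 0" "f z \<le> 0"
  shows "f y < 0"
proof -
  define t where "t = (y - a) / (z - a)"
  have t: "0 < t" "t < 1"
    using assms(4,5) by (auto simp: t_def)
  have "t * (z - a) = y - a"
    using assms(4,5) by (simp add: t_def)
  then have "y = (1 - t) *\<^sub>R a + t *\<^sub>R z"
    by (simp add: algebra_simps)
  then have "f y \<le> (1 - t) * f a + t * f z"
    using convex_onD[OF assms(1), of t a z] t assms(2,3) by simp
  also have "\<dots> < 0"
    using t assms(6,7) by (smt (verit) mult_pos_neg mult_pos_pos mult_nonneg_nonpos)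
  finally show ?thesis .
qed

lemma convex_on_zero_unique:
  fixes f :: "real \<Rightarrow> real"
  assumes "convex_on S f" "a \<in> S" "f a < 0"
    and "y \<in> S" "a < y" "f y = 0" "z \<in> S" "a < z" "f z = 0"
  shows "y = z"
  using convex_on_neg_between[OF assms(1,2,4), of z] convex_on_neg_between[OF assms(1,2,7), of y]
    assms by (cases y z rule: linorder_cases) auto

lemma exists_zero_right_of_neg:
  fixes f :: "real \<Rightarrow> real"
  assumes "continuous_on {a..} f" "f a < 0" "filterlim f at_top at_top"
  shows "\<exists>x>a. f x = 0"
proof -
  obtain X where X: "X > a" "f X > 0"
    using eventually_ge_at_top[of "a + 1"] filterlim_at_top_dense assms(3)
    by (smt (verit) eventually_at_top_linorder)
  then obtain x where "a \<le> x" "x \<le> X" "f x = 0"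
    using IVT'[of f a 0 X] assms(1,2) continuous_on_subset[OF assms(1)] by fastforce
  moreover have "x \<noteq> a"
    using \<open>f x = 0\<close> assms(2) by auto
  ultimately show ?thesis
    by (auto simp: order_le_less)
qed

lemma ex1_zero_powr_affine:
  fixes a b \<beta> m k x\<^sub>0 :: real
  defines "g \<equiv> \<lambda>x. a * x powr (\<beta> + 1) - b * x powr \<beta> + m * x + k"
  assumes "0 < a" "0 \<le> b" "0 < \<beta>" "\<beta> \<le> 1" "0 < x\<^sub>0" "g x\<^sub>0 < 0"
  shows "\<exists>!x. x > x\<^sub>0 \<and> g x = 0"
proof -
  have convex: "convex_on {0<..} g"
    unfolding g_def using assms by (intro convex_on_powr_affine) auto
  have "continuous_on {x\<^sub>0..} g"
    unfolding g_def using assms(6) by (intro continuous_intros) auto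
  moreover have "filterlim g at_top at_top"
    unfolding g_def using assms(2,4) by real_asymp
  ultimately obtain r where "r > x\<^sub>0" "g r = 0"
    using exists_zero_right_of_neg assms(7) by blast
  then show ?thesis
    using convex_on_zero_unique[OF convex _ assms(7)] assms(6) by (intro ex1I[of _ r]) auto
qed

theorem lemma2:
  fixes N p \<theta> \<beta> :: real
  assumes "N > 1" and "2 < p" and "p < 6"
    and "vartheta p 3 < \<theta>" and "\<theta> < 1"
    and "\<beta> = 1 - (p - 2) / (2 * p * \<theta>)"
  shows "\<exists>!x. x \<in> {N powr (1 / \<beta>)<..} \<and>
    \<theta> * (6 - p) * (x powr \<beta> - N) * x
      - (2 * p * \<theta> - 3 * (p - 2)) * (\<theta> * (x powr \<beta> - N) + (1 - \<theta>) * (x - 1) * N) = 0"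
proof -
  define c where "c = 2 * p * \<theta> - 3 * (p - 2)"
  have c: "c > 0"
    using assms(2,4) by (simp add: c_def vartheta_def field_simps)
  have \<theta>: "\<theta> > 0"
    using assms(2) c unfolding c_def by (smt (verit) mult_nonneg_nonpos)
  have "(p - 2) / (2 * p * \<theta>) < 1/3"
    using assms(2,4) \<theta> by (simp add: vartheta_def field_simps)
  then have \<beta>: "0 < \<beta>" "\<beta> < 1"
    using assms(2,6) \<theta> by auto
  define x\<^sub>0 where "x\<^sub>0 = N powr (1 / \<beta>)"
  have x\<^sub>0: "x\<^sub>0 > 1" "x\<^sub>0 powr \<beta> = N"
    using assms(1) \<beta> by (auto simp: x\<^sub>0_def powr_powr)
  define E where "E x = \<theta> * (6 - p) * (x powr \<beta> - N) * x
      - c * (\<theta> * (x powr \<beta> - N) + (1 - \<theta>) * (x - 1) * N)" for x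
  define g where "g = (\<lambda>x. \<theta> * (6 - p) * x powr (\<beta> + 1) - c * \<theta> * x powr \<beta>
      + (- (\<theta> * (6 - p) + c * (1 - \<theta>)) * N) * x + c * N)"
  have g: "g x = E x" if "x > 0" for x
  proof -
    have "x powr (\<beta> + 1) = x powr \<beta> * x"
      using that by (simp add: powr_add)
    then show ?thesis
      by (simp add: g_def E_def algebra_simps)
  qed
  have "E x\<^sub>0 = - (c * (1 - \<theta>) * (x\<^sub>0 - 1) * N)"
    by (simp add: E_def x\<^sub>0(2))
  then have "g x\<^sub>0 < 0"
    using g[of x\<^sub>0] x\<^sub>0(1) c assms(1,5) by simp
  then have "\<exists>!x. x > x\<^sub>0 \<and> g x = 0"
    unfolding g_def using assms(3) \<theta> c \<beta> x\<^sub>0(1) by (intro ex1_zero_powr_affine) auto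
  moreover have "x > x\<^sub>0 \<and> g x = 0 \<longleftrightarrow> x > x\<^sub>0 \<and> E x = 0" for x
    using g[of x] x\<^sub>0(1) by auto
  moreover have "?thesis \<longleftrightarrow> (\<exists>!x. x > x\<^sub>0 \<and> E x = 0)"
    by (simp only: E_def x\<^sub>0_def c_def greaterThan_iff)
  ultimately show ?thesis
    by simp
qed

end
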